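(* Let $\pi\in\mathcal C_n(321)$ and $w=\hat\pi$. Then $$\#\{(i,k): i+2\le k\le n,\ \hat\pi_k<\hat\pi_i<\hat\pi_{i+1}<\pi(\hat\pi_k)\}=N_{\underline{23}\,\underline{14}}(w)+N_{\underline{23}\,\underline{1}}(w).$$
   Context: Permutations of $[n]$ are written in one-line notation $\pi=\pi_1\cdots\pi_n$. A permutation contains $321$ if there are $i<j<k$ with $\pi_i>\pi_j>\pi_k$. $\mathcal C_n$ is the set of cyclic permutations of $[n]$ (a single $n$-cycle), and $\mathcal C_n(321)$ those avoiding $321$. The standard cycle notation of $\pi$ writes each cycle with its largest element first, as $(m,\pi(m),\pi^2(m),\dots)$, and lists the cycles in increasing order of their largest elements. $\theta:S_n\to S_n$ sends $\pi$ to the permutation whose one-line notation is the standard cycle notation of $\pi$ with parentheses erased; $\hat\pi=\theta(\pi)$. For a sequence $w=w_1\cdots w_N$ of distinct integers: $N_{\underline{23}\,\underline{14}}(w)=\#\{(i,j): i+2\le j\le N-1,\ w_j<w_i<w_{i+1}<w_{j+1}\}$; $N_{\underline{23}\,\underline{1}}(w)=\#\{i: i+1\le N-1,\ w_N<w_i<w_{i+1}\}$ (the "1" is the last entry of $w$). *)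

theory Defs
  imports "HOL-Combinatorics.Permutations"
begin

definition cyclic_perm :: "nat \<Rightarrow> (nat \<Rightarrow> nat) \<Rightarrow> bool" where
  "cyclic_perm n \<pi> \<longleftrightarrow> \<pi> permutes {1..n} \<and> n \<ge> 1 \<and>
     (\<forall>x\<in>{1..n}. {(\<pi> ^^ k) x | k. True} = {1..n})"

definition avoids321 :: "nat \<Rightarrow> (nat \<Rightarrow> nat) \<Rightarrow> bool" where
  "avoids321 n \<pi> \<longleftrightarrow>
     \<not> (\<exists>i j k. 1 \<le> i \<and> i < j \<and> j < k \<and> k \<le> n \<and> \<pi> i > \<pi> j \<and> \<pi> j > \<pi> k)"

definition cyc_len :: "(nat \<Rightarrow> nat) \<Rightarrow> nat \<Rightarrow> nat" where
  "cyc_len \<pi> m = (LEAST k. 0 < k \<and> (\<pi> ^^ k) m = m)"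

definition cyc_leaders :: "nat \<Rightarrow> (nat \<Rightarrow> nat) \<Rightarrow> nat set" where
  "cyc_leaders n \<pi> = {m \<in> {1..n}. \<forall>k. (\<pi> ^^ k) m \<le> m}"

text \<open>theta: standard cycle notation with parentheses erased, as a list
  (entry i of the one-line notation is the list element at index i-1).\<close>
definition theta :: "nat \<Rightarrow> (nat \<Rightarrow> nat) \<Rightarrow> nat list" where
  "theta n \<pi> = concat (map (\<lambda>m. map (\<lambda>k. (\<pi> ^^ k) m) [0..<cyc_len \<pi> m])
                            (sorted_list_of_set (cyc_leaders n \<pi>)))"

definition at1 :: "nat list \<Rightarrow> nat \<Rightarrow> nat" where
  "at1 w i = w ! (i - 1)"

definition N2314 :: "nat list \<Rightarrow> nat" where
  "N2314 w = card {(i, j). 1 \<le> i \<and> i + 2 \<le> j \<and> j + 1 \<le> length w \<and>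
      at1 w j < at1 w i \<and> at1 w i < at1 w (i + 1) \<and> at1 w (i + 1) < at1 w (j + 1)}"

definition N231 :: "nat list \<Rightarrow> nat" where
  "N231 w = card {i. 1 \<le> i \<and> i + 2 \<le> length w \<and>
      at1 w (length w) < at1 w i \<and> at1 w i < at1 w (i + 1)}"

end

theory Submission
  imports Defs "HOL-Combinatorics.Cycles"
begin

text \<open>For a cyclic permutation the standard cycle notation is the single cycle
  \<open>(n, \<pi>(n), \<pi>\<^sup>2(n), \<dots>)\<close>, so \<open>\<pi>\<close> maps each entry of \<open>w = \<theta>(\<pi>)\<close> to the next
  one and the last entry back to \<open>n\<close>. The pairs with \<open>k < n\<close> are therefore the
  occurrences counted by \<open>N2314\<close>; for \<open>k = n\<close> the condition \<open>w\<^sub>i\<^sub>+\<^sub>1 < \<pi>(w\<^sub>n) = n\<close>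
  holds automatically, leaving the occurrences counted by \<open>N231\<close>.\<close>

lemma cyclic_perm_funpow_in:
  assumes "cyclic_perm n \<pi>" "x \<in> {1..n}"
  shows "(\<pi> ^^ k) x \<in> {1..n}"
proof -
  have "\<pi> permutes {1..n}"
    using assms(1) by (simp add: cyclic_perm_def)
  then show ?thesis
    using assms(2) permutes_in_image[OF permutes_funpow] by metis
qed

lemma cyclic_perm_funpow_neq_self:
  assumes c: "cyclic_perm n \<pi>" and x: "x \<in> {1..n}" and k: "0 < k" "k < n"
  shows "(\<pi> ^^ k) x \<noteq> x"
proof
  assume period: "(\<pi> ^^ k) x = x"
  have "{1..n} = {(\<pi> ^^ j) x | j. True}"
    using c x by (simp add: cyclic_perm_def)
  also have "\<dots> \<subseteq> (\<lambda>j. (\<pi> ^^ j) x) ` {..<k}"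
  proof clarify
    fix j
    have "(\<pi> ^^ j) x = (\<pi> ^^ (j mod k)) x"
      using funpow_mod_eq[OF period] by simp
    moreover have "j mod k < k"
      using k by simp
    ultimately show "(\<pi> ^^ j) x \<in> (\<lambda>j. (\<pi> ^^ j) x) ` {..<k}"
      by blast
  qed
  finally have "card {1..n} \<le> card ((\<lambda>j. (\<pi> ^^ j) x) ` {..<k})"
    by (intro card_mono) auto
  also have "\<dots> \<le> k"
    using card_image_le[of "{..<k}"] by simp
  finally show False
    using k by simp
qed

lemma cyclic_perm_funpow_period:
  assumes c: "cyclic_perm n \<pi>" and x: "x \<in> {1..n}"
  shows "(\<pi> ^^ n) x = x"
proof -
  have p: "\<pi> permutes {1..n}"
    using c by (simp add: cyclic_perm_def)
  have "\<not> inj_on (\<lambda>j. (\<pi> ^^ j) x) {0..n}"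
  proof
    assume "inj_on (\<lambda>j. (\<pi> ^^ j) x) {0..n}"
    moreover have "(\<lambda>j. (\<pi> ^^ j) x) ` {0..n} \<subseteq> {1..n}"
      using cyclic_perm_funpow_in[OF c x] by auto
    ultimately have "card {0..n} \<le> card {1..n}"
      by (intro card_inj_on_le) auto
    then show False by simp
  qed
  then obtain a b where ab: "a < b" "b \<le> n" "(\<pi> ^^ a) x = (\<pi> ^^ b) x"
    unfolding inj_on_def by (metis atLeastAtMost_iff linorder_neqE_nat)
  then have period: "(\<pi> ^^ (b - a)) x = x"
    using funpow_diff[OF permutes_inj[OF p]] by simp
  then have "b - a = n"
    using cyclic_perm_funpow_neq_self[OF c x, of "b - a"] ab by force
  with period show ?thesis by simp
qed

lemma cyc_leaders_cyclic_perm: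
  assumes c: "cyclic_perm n \<pi>"
  shows "cyc_leaders n \<pi> = {n}"
proof -
  have n: "n \<in> {1..n}"
    using c by (simp add: cyclic_perm_def)
  have "m = n" if "m \<in> {1..n}" "\<forall>k. (\<pi> ^^ k) m \<le> m" for m
  proof -
    have "n \<in> {(\<pi> ^^ k) m | k. True}"
      using c that(1) n by (simp add: cyclic_perm_def)
    then obtain k where "n = (\<pi> ^^ k) m"
      by blast
    then show "m = n"
      using that by (metis atLeastAtMost_iff le_antisym)
  qed
  then show ?thesis
    using n cyclic_perm_funpow_in[OF c n] by (auto simp: cyc_leaders_def)
qed

lemma cyc_len_cyclic_perm:
  assumes c: "cyclic_perm n \<pi>" and x: "x \<in> {1..n}"
  shows "cyc_len \<pi> x = n"
  unfolding cyc_len_def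
proof (rule Least_equality)
  show "0 < n \<and> (\<pi> ^^ n) x = x"
    using x cyclic_perm_funpow_period[OF c x] by simp
  show "n \<le> k" if "0 < k \<and> (\<pi> ^^ k) x = x" for k
    using that cyclic_perm_funpow_neq_self[OF c x] by (meson not_le)
qed

lemma theta_cyclic_perm:
  assumes c: "cyclic_perm n \<pi>"
  shows "theta n \<pi> = map (\<lambda>k. (\<pi> ^^ k) n) [0..<n]"
proof -
  have "n \<in> {1..n}"
    using c by (simp add: cyclic_perm_def)
  then show ?thesis
    unfolding theta_def cyc_leaders_cyclic_perm[OF c]
    by (simp add: cyc_len_cyclic_perm[OF c])
qed

lemma at1_theta_cyclic_perm:
  assumes "cyclic_perm n \<pi>" "1 \<le> k" "k \<le> n"
  shows "at1 (theta n \<pi>) k = (\<pi> ^^ (k - 1)) n"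
proof -
  have "k - 1 < n"
    using assms(2,3) by simp
  then show ?thesis
    by (simp add: theta_cyclic_perm[OF assms(1)] at1_def)
qed

lemma theta_cyclic_perm_next:
  assumes c: "cyclic_perm n \<pi>" and k: "1 \<le> k" "k < n"
  shows "\<pi> (at1 (theta n \<pi>) k) = at1 (theta n \<pi>) (k + 1)"
proof -
  have "\<pi> ((\<pi> ^^ (k - 1)) n) = (\<pi> ^^ Suc (k - 1)) n"
    by simp
  also have "Suc (k - 1) = k"
    using k by simp
  finally show ?thesis
    using k by (simp add: at1_theta_cyclic_perm[OF c])
qed

lemma theta_cyclic_perm_last:
  assumes c: "cyclic_perm n \<pi>"
  shows "\<pi> (at1 (theta n \<pi>) n) = n"
proof -
  have n: "n \<in> {1..n}"
    using c by (simp add: cyclic_perm_def)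
  have "\<pi> ((\<pi> ^^ (n - 1)) n) = (\<pi> ^^ Suc (n - 1)) n"
    by simp
  also have "Suc (n - 1) = n"
    using n by simp
  finally show ?thesis
    using n by (simp add: at1_theta_cyclic_perm[OF c] cyclic_perm_funpow_period[OF c n])
qed

lemma at1_theta_cyclic_perm_less:
  assumes c: "cyclic_perm n \<pi>" and k: "2 \<le> k" "k \<le> n"
  shows "at1 (theta n \<pi>) k < n"
proof -
  have n: "n \<in> {1..n}"
    using c by (simp add: cyclic_perm_def)
  have "(\<pi> ^^ (k - 1)) n \<in> {1..n}" "(\<pi> ^^ (k - 1)) n \<noteq> n"
    using k cyclic_perm_funpow_in[OF c n] cyclic_perm_funpow_neq_self[OF c n] by auto
  then show ?thesis
    using k by (simp add: at1_theta_cyclic_perm[OF c])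
qed

lemma card_pattern_eq_N2314_add_N231:
  fixes w :: "nat list" and \<sigma> :: "nat \<Rightarrow> nat"
  assumes next_entry: "\<And>k. 1 \<le> k \<Longrightarrow> k < length w \<Longrightarrow> \<sigma> (at1 w k) = at1 w (k + 1)"
    and last_entry: "\<And>i. 1 \<le> i \<Longrightarrow> i + 2 \<le> length w \<Longrightarrow>
      at1 w (i + 1) < \<sigma> (at1 w (length w))"
  shows "card {(i, k). 1 \<le> i \<and> i + 2 \<le> k \<and> k \<le> length w \<and>
           at1 w k < at1 w i \<and> at1 w i < at1 w (i + 1) \<and> at1 w (i + 1) < \<sigma> (at1 w k)}
         = N2314 w + N231 w"
proof -
  define N where "N = length w"
  define S where "S = {(i, k). 1 \<le> i \<and> i + 2 \<le> k \<and> k \<le> N \<and>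
      at1 w k < at1 w i \<and> at1 w i < at1 w (i + 1) \<and> at1 w (i + 1) < \<sigma> (at1 w k)}"
  define A where "A = {(i, j). 1 \<le> i \<and> i + 2 \<le> j \<and> j + 1 \<le> N \<and>
      at1 w j < at1 w i \<and> at1 w i < at1 w (i + 1) \<and> at1 w (i + 1) < at1 w (j + 1)}"
  define B where "B = {i. 1 \<le> i \<and> i + 2 \<le> N \<and>
      at1 w N < at1 w i \<and> at1 w i < at1 w (i + 1)}"
  have "S = (S \<inter> {(i, k). k < N}) \<union> (S \<inter> {(i, k). k = N})"
    unfolding S_def by auto
  also have "S \<inter> {(i, k). k < N} = A"
    unfolding S_def A_def using next_entry by (auto simp: N_def)
  also have "S \<inter> {(i, k). k = N} = (\<lambda>i. (i, N)) ` B"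
    unfolding S_def B_def using last_entry by (auto simp: N_def)
  finally have split: "S = A \<union> (\<lambda>i. (i, N)) ` B" .
  have "finite A"
    unfolding A_def by (rule finite_subset[of _ "{0..N} \<times> {0..N}"]) auto
  moreover have "finite B"
    unfolding B_def by (rule finite_subset[of _ "{0..N}"]) auto
  moreover have "A \<inter> (\<lambda>i. (i, N)) ` B = {}"
    unfolding A_def by auto
  ultimately have "card S = card A + card ((\<lambda>i. (i, N)) ` B)"
    unfolding split by (intro card_Un_disjoint) auto
  also have "card ((\<lambda>i. (i, N)) ` B) = card B"
    by (rule card_image) (auto simp: inj_on_def)
  finally show ?thesis
    unfolding S_def A_def B_def N2314_def N231_def N_def .
qed

theorem mainTheorem5:
  fixes n :: nat and \<pi> :: "nat \<Rightarrow> nat"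
  assumes "cyclic_perm n \<pi>" and "avoids321 n \<pi>"
  defines "w \<equiv> theta n \<pi>"
  shows "card {(i, k). 1 \<le> i \<and> i + 2 \<le> k \<and> k \<le> n \<and>
             at1 w k < at1 w i \<and> at1 w i < at1 w (i + 1) \<and> at1 w (i + 1) < \<pi> (at1 w k)}
         = N2314 w + N231 w"
proof -
  have "length w = n"
    using assms(1) by (simp add: w_def theta_cyclic_perm)
  moreover have "\<pi> (at1 w k) = at1 w (k + 1)" if "1 \<le> k" "k < n" for k
    using theta_cyclic_perm_next[OF assms(1) that] by (simp add: w_def)
  moreover have "at1 w (i + 1) < \<pi> (at1 w n)" if "1 \<le> i" "i + 2 \<le> n" for i
    using that at1_theta_cyclic_perm_less[OF assms(1), of "i + 1"] theta_cyclic_perm_last[OF assms(1)]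
    by (simp add: w_def)
  ultimately show ?thesis
    using card_pattern_eq_N2314_add_N231[of w \<pi>] by simp
qed

end
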